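(* For every many-to-many matching game with additive externalities $G$, the optimistic, neutral, and pessimistic stable sets satisfy $\mathcal{O}\text{-set}(G)\subseteq\mathcal{N}\text{-set}(G)\subseteq\mathcal{P}\text{-set}(G)$.
   Context: Agents: $N=M\cup W$ with $M,W$ disjoint finite sets. A match is a pair $(m,w)$ with $m\in M$, $w\in W$; a (many-to-many) matching is any set of matches. Forming a match requires consent of both endpoints; severing can be done unilaterally by either endpoint. A game is $G=(M,W,\Pi)$ where $\Pi(m,w\mid z)\in\mathbb{R}$ is the value agent $z$ receives from the formation of match $(m,w)$; utility is $u(z,\mathcal{A})=\sum_{(m,w)\in\mathcal{A}}\Pi(m,w\mid z)$. A coalition $B\subseteq N$ blocks $\mathcal{A}$ if, by rearranging matches among its members and deleting a (possibly empty) subset of its members' matches with agents in $N\setminus B$, with every member of $B$ performing at least one action, it makes at least one member strictly better off and no member worse off, where the deviators' utilities after deviation are evaluated according to an assumed reaction of $N\setminus B$: neutral (no reaction: matches among non-deviators remain, none form); optimistic (each $i\in B$ assumes $N\setminus B$ organize in the best possible way for $i$, cutting matches with negative influence on $i$ and forming all matches with positive influence on $i$, including ones with $i$ as endpoint); pessimistic (each deviator assumes $N\setminus B$ punish it maximally, cutting matches with positive influence on it and forming matches with negative influence on it). $\mathcal{O}\text{-set}(G)$, $\mathcal{N}\text{-set}(G)$, $\mathcal{P}\text{-set}(G)$ denote the sets of matchings admitting no blocking coalition under optimistic, neutral, and pessimistic reasoning respectively. *)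

theory Defs
  imports Complex_Main
begin

(* Agents of type 'a; men M, women W (disjoint, finite).
   Pi m w z : value agent z receives from formation of match (m,w). *)

definition is_game :: "'a set \<Rightarrow> 'a set \<Rightarrow> bool" where
  "is_game M W \<longleftrightarrow> finite M \<and> finite W \<and> M \<inter> W = {}"

definition is_matching :: "'a set \<Rightarrow> 'a set \<Rightarrow> ('a \<times> 'a) set \<Rightarrow> bool" where
  "is_matching M W A \<longleftrightarrow> A \<subseteq> M \<times> W"

definition util :: "('a \<Rightarrow> 'a \<Rightarrow> 'a \<Rightarrow> real) \<Rightarrow> 'a \<Rightarrow> ('a \<times> 'a) set \<Rightarrow> real" where
  "util Pi z A = (\<Sum>(m, w)\<in>A. Pi m w z)"

definition deviation :: "'a set \<Rightarrow> 'a set \<Rightarrow> 'a set \<Rightarrow> ('a \<times> 'a) set \<Rightarrow> ('a \<times> 'a) set \<Rightarrow> bool" where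
  "deviation M W B A A' \<longleftrightarrow>
     A' \<subseteq> M \<times> W \<and>
     (\<forall>m w. m \<notin> B \<and> w \<notin> B \<longrightarrow> ((m, w) \<in> A' \<longleftrightarrow> (m, w) \<in> A)) \<and>
     (\<forall>m w. (m \<in> B) \<noteq> (w \<in> B) \<longrightarrow> (m, w) \<in> A' \<longrightarrow> (m, w) \<in> A) \<and>
     (\<forall>i\<in>B. \<exists>(m, w)\<in>(A - A') \<union> (A' - A). i = m \<or> i = w)"

datatype reasoning = Optimistic | Neutral | Pessimistic

(* Matching that deviator i assumes to result after the reaction of N \ B
   to the post-deviation matching A'. Non-deviators can unilaterally sever any
   match having them as an endpoint, and can form matches among themselves
   (optimistically also matches with i, who consents). *)
fun outcome :: "reasoning \<Rightarrow> 'a set \<Rightarrow> 'a set \<Rightarrow> ('a \<Rightarrow> 'a \<Rightarrow> 'a \<Rightarrow> real)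
     \<Rightarrow> 'a set \<Rightarrow> 'a \<Rightarrow> ('a \<times> 'a) set \<Rightarrow> ('a \<times> 'a) set" where
  "outcome Neutral M W Pi B i A' = A'"
| "outcome Optimistic M W Pi B i A' =
     (A' - {(m, w). (m \<notin> B \<or> w \<notin> B) \<and> Pi m w i < 0})
     \<union> {(m, w)\<in>M \<times> W. ((m \<notin> B \<and> w \<notin> B) \<or> (m = i \<and> w \<notin> B) \<or> (w = i \<and> m \<notin> B))
                        \<and> Pi m w i > 0}"
| "outcome Pessimistic M W Pi B i A' =
     (A' - {(m, w). (m \<notin> B \<or> w \<notin> B) \<and> Pi m w i > 0})
     \<union> {(m, w)\<in>M \<times> W. m \<notin> B \<and> w \<notin> B \<and> Pi m w i < 0}"

definition blocks :: "reasoning \<Rightarrow> 'a set \<Rightarrow> 'a set \<Rightarrow> ('a \<Rightarrow> 'a \<Rightarrow> 'a \<Rightarrow> real)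
     \<Rightarrow> 'a set \<Rightarrow> ('a \<times> 'a) set \<Rightarrow> bool" where
  "blocks r M W Pi B A \<longleftrightarrow> B \<subseteq> M \<union> W \<and>
     (\<exists>A'. deviation M W B A A' \<and>
        (\<forall>i\<in>B. util Pi i (outcome r M W Pi B i A') \<ge> util Pi i A) \<and>
        (\<exists>i\<in>B. util Pi i (outcome r M W Pi B i A') > util Pi i A))"

definition stable_set :: "reasoning \<Rightarrow> 'a set \<Rightarrow> 'a set \<Rightarrow> ('a \<Rightarrow> 'a \<Rightarrow> 'a \<Rightarrow> real)
     \<Rightarrow> ('a \<times> 'a) set set" where
  "stable_set r M W Pi = {A. is_matching M W A \<and> (\<forall>B. \<not> blocks r M W Pi B A)}"

end

theory Submission
  imports Defs
begin

text \<open>Since utilities are additive, the optimistic reaction can only add matches of positive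
  value to a deviator and remove matches of negative value, so it never lowers the deviator's
  utility below the neutral one; dually the pessimistic reaction never raises it. Hence every
  pessimistic blocking coalition blocks neutrally, and every neutral one blocks optimistically,
  which reverses into the inclusions of the stable sets.\<close>

lemma sum_Diff_Un_le:
  fixes f :: "'b \<Rightarrow> 'c::ordered_comm_monoid_add"
  assumes "finite S" "finite Y"
    and "\<And>x. x \<in> S \<inter> X \<Longrightarrow> 0 \<le> f x" and "\<And>y. y \<in> Y \<Longrightarrow> f y \<le> 0"
  shows "sum f ((S - X) \<union> Y) \<le> sum f S"
proof -
  have "sum f ((S - X) \<union> Y) = sum f (S - X) + sum f (Y - (S - X))"
    using assms(1,2) by (subst sum.union_disjoint[symmetric]) (auto intro: sum.cong)
  also have "\<dots> \<le> sum f (S - X) + 0"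
    using assms(4) by (intro add_left_mono sum_nonpos) auto
  also have "\<dots> \<le> sum f (S - X) + sum f (S \<inter> X)"
    using assms(3) by (intro add_left_mono sum_nonneg) auto
  also have "\<dots> = sum f S"
    using assms(1) by (metis add.commute sum.Int_Diff)
  finally show ?thesis .
qed

lemma sum_Diff_Un_ge:
  fixes f :: "'b \<Rightarrow> 'c::ordered_ab_group_add"
  assumes "finite S" "finite Y"
    and "\<And>x. x \<in> S \<inter> X \<Longrightarrow> f x \<le> 0" and "\<And>y. y \<in> Y \<Longrightarrow> 0 \<le> f y"
  shows "sum f S \<le> sum f ((S - X) \<union> Y)"
  using sum_Diff_Un_le[of S Y X "\<lambda>x. - f x"] assms by (simp add: sum_negf)

lemma util_outcome_Pessimistic_le:
  assumes "is_game M W" "A' \<subseteq> M \<times> W"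
  shows "util Pi i (outcome Pessimistic M W Pi B i A') \<le> util Pi i A'"
proof -
  have "finite (M \<times> W)" using assms(1) by (simp add: is_game_def)
  then show ?thesis
    unfolding util_def outcome.simps
    using assms(2) by (intro sum_Diff_Un_le) (auto intro: finite_subset)
qed

lemma util_outcome_Optimistic_ge:
  assumes "is_game M W" "A' \<subseteq> M \<times> W"
  shows "util Pi i A' \<le> util Pi i (outcome Optimistic M W Pi B i A')"
proof -
  have "finite (M \<times> W)" using assms(1) by (simp add: is_game_def)
  then show ?thesis
    unfolding util_def outcome.simps
    using assms(2) by (intro sum_Diff_Un_ge) (auto intro: finite_subset)
qed

lemma blocks_if_outcome_util_le:
  assumes le: "\<And>i A'. deviation M W B A A' \<Longrightarrow>
      util Pi i (outcome r M W Pi B i A') \<le> util Pi i (outcome s M W Pi B i A')"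
    and "blocks r M W Pi B A"
  shows "blocks s M W Pi B A"
proof -
  obtain A' where "B \<subseteq> M \<union> W" and dev: "deviation M W B A A'"
    and weak: "\<forall>i\<in>B. util Pi i (outcome r M W Pi B i A') \<ge> util Pi i A"
    and strict: "\<exists>i\<in>B. util Pi i (outcome r M W Pi B i A') > util Pi i A"
    using assms(2) unfolding blocks_def by blast
  moreover have "\<forall>i\<in>B. util Pi i (outcome s M W Pi B i A') \<ge> util Pi i A"
    using weak le[OF dev] by (meson order_trans)
  moreover have "\<exists>i\<in>B. util Pi i (outcome s M W Pi B i A') > util Pi i A"
    using strict le[OF dev] by (meson less_le_trans)
  ultimately show ?thesis unfolding blocks_def by blast
qed

lemma stable_set_subset_if_outcome_util_le:
  assumes "\<And>B A i A'. deviation M W B A A' \<Longrightarrow>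
      util Pi i (outcome r M W Pi B i A') \<le> util Pi i (outcome s M W Pi B i A')"
  shows "stable_set s M W Pi \<subseteq> stable_set r M W Pi"
proof -
  have "blocks s M W Pi B A" if "blocks r M W Pi B A" for B A
    using assms that by (rule blocks_if_outcome_util_le)
  then show ?thesis unfolding stable_set_def by blast
qed

theorem theorem9:
  fixes M W :: "'a set" and Pi :: "'a \<Rightarrow> 'a \<Rightarrow> 'a \<Rightarrow> real"
  assumes "is_game M W"
  shows "stable_set Optimistic M W Pi \<subseteq> stable_set Neutral M W Pi
       \<and> stable_set Neutral M W Pi \<subseteq> stable_set Pessimistic M W Pi"
proof
  show "stable_set Optimistic M W Pi \<subseteq> stable_set Neutral M W Pi"
    using util_outcome_Optimistic_ge[OF assms]
    by (intro stable_set_subset_if_outcome_util_le) (simp add: deviation_def)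
  show "stable_set Neutral M W Pi \<subseteq> stable_set Pessimistic M W Pi"
    using util_outcome_Pessimistic_le[OF assms]
    by (intro stable_set_subset_if_outcome_util_le) (simp add: deviation_def)
qed

end
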